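(* Let $m,\hbar>0$, $0<E<U_0$, $l>0$, and let $U:\mathbb{R}\to\mathbb{R}$ be piecewise continuous with $U(x)=0$ for $x<0$ and $U(x)=U_0$ for $x>l$. Let $\theta\in(-\pi/2,\pi/2)$, $\kappa=\sqrt{2mE}/\hbar$, $a=\kappa\sin\theta$, $k=\kappa\cos\theta$, $\lambda=\sqrt{a^2+\kappa^2}$, $K_U^2=\frac{2m}{\hbar^2}(U_0-E)$, and assume $K_U^2>a^2$; set $k_U=\sqrt{K_U^2-a^2}>0$, $\lambda_U=\sqrt{a^2+K_U^2}$. Consider $\partial_x\tilde\Psi=A(x)\tilde\Psi$ with $A(x)$ as below and $\tilde U=\frac{2m}{\hbar^2}(U-E)$. On $x<0$ let $\psi_R=e^{ikx}v_R$, $\psi_L=e^{-ikx}v_L$ with $v_R=(a+ik,-\kappa^2,-(a-ik),-\kappa^2)^t$, $v_L=\overline{v_R}$, and $\psi_+=e^{\lambda x}w_+$ with $w_+$ a nonzero eigenvector of the constant matrix $A|_{x<0}$ for the eigenvalue $\lambda$. On $x>l$ let $\phi_R=e^{ik_Ux}v_R'$, $\phi_L=e^{-ik_Ux}v_L'$ with $v_R'=(a+ik_U,-K_U^2,a-ik_U,K_U^2)^t$, $v_L'=\overline{v_R'}$, and $\phi_-=e^{-\lambda_Ux}w_-'$ with $w_-'$ a nonzero eigenvector of $A|_{x>l}$ for the eigenvalue $-\lambda_U$. Let $S$ be the space of solutions which equal $a_1\psi_R+a_2\psi_L+a_3\psi_+$ on $x<0$ and $a_4\phi_R+a_5\phi_L+a_6\phi_-$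 on $x>l$ for some constants $a_j\in\mathbb{C}$. Assume that the maps $S\to\mathbb{C}^2$, $\Psi\mapsto(a_1,a_2)$ and $\Psi\mapsto(a_4,a_5)$ are both linear bijections, and let $A_{n\text{-}p}$ be the $2\times2$ matrix with $(a_1,a_2)^t=A_{n\text{-}p}(a_4,a_5)^t$ for all elements of $S$. Then $$\det A_{n\text{-}p}=\frac{k_U\,(E-U_0)}{k\,E}.$$
   Context: Here $A(x)=\begin{pmatrix} a&1&0&0\\0&a&\tilde U(x)&0\\0&0&-a&1\\ \tilde U(x)&0&0&-a\end{pmatrix}$ is the bilayer graphene transfer equation; $\psi_R,\psi_L,\psi_+$ solve it on $x<0$ (where $\tilde U=-\kappa^2$) and $\phi_R,\phi_L,\phi_-$ solve it on $x>l$ (where $\tilde U=K_U^2$). $A_{n\text{-}p}$ is the transmission matrix of the n-p junction between the propagating-wave coefficients on the two sides. *)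

theory Defs
  imports "HOL-Analysis.Analysis"
begin

definition piecewise_continuous :: "(real \<Rightarrow> real) \<Rightarrow> bool" where
  "piecewise_continuous U \<longleftrightarrow>
     (\<exists>D. finite D \<and> (\<forall>x. x \<notin> D \<longrightarrow> isCont U x) \<and>
        (\<forall>x\<in>D. (\<exists>L. (U \<longlongrightarrow> L) (at_left x)) \<and> (\<exists>R. (U \<longlongrightarrow> R) (at_right x))))"

definition Amat :: "real \<Rightarrow> real \<Rightarrow> complex^4^4" where
  "Amat a ut = vector [
      vector [complex_of_real a, 1, 0, 0],
      vector [0, complex_of_real a, complex_of_real ut, 0],
      vector [0, 0, - complex_of_real a, 1],
      vector [complex_of_real ut, 0, 0, - complex_of_real a]]"

text \<open>Solutions of the system: continuous on the real line and satisfying the ODE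
at every point outside a finite set (the coefficient is only piecewise continuous).\<close>
definition is_solution :: "real \<Rightarrow> (real \<Rightarrow> real) \<Rightarrow> (real \<Rightarrow> complex^4) \<Rightarrow> bool" where
  "is_solution a Ut \<Psi> \<longleftrightarrow>
     continuous_on UNIV \<Psi> \<and>
     (\<exists>D. finite D \<and> (\<forall>x. x \<notin> D \<longrightarrow> (\<Psi> has_vector_derivative (Amat a (Ut x) *v \<Psi> x)) (at x)))"

end

theory Submission
  imports Defs
begin

text \<open>Every matrix \<open>Amat a u\<close> is infinitesimally symplectic for the skew form
\<open>symp_form\<close>, so \<open>symp_form (\<Psi> x) (\<Phi> x)\<close> is independent of \<open>x\<close> for any two solutions.
The form vanishes between eigenvectors whose eigenvalues do not add up to zero; hence on either
half-line it only sees the coefficients of the two propagating waves, and equals the \<open>2\<times>2\<close>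
determinant of those coefficients times the value of the form on the pair of plane waves
(\<open>-4\<i>k\<kappa>\<^sup>2\<close> on the left, \<open>4\<i>k\<^sub>UK\<^sub>U\<^sup>2\<close> on the right). Applying this to the two
solutions with right coefficients \<open>(1,0)\<close> and \<open>(0,1)\<close>, whose left coefficients are the columns
of the transfer matrix, gives \<open>det A\<^sub>n\<^sub>-\<^sub>p \<cdot> (-4\<i>k\<kappa>\<^sup>2) = 4\<i>k\<^sub>UK\<^sub>U\<^sup>2\<close>.\<close>

lemma vector_4 [simp]:
  "(vector [x, y, z, w] :: 'a::zero^4) $ 1 = x"
  "(vector [x, y, z, w] :: 'a^4) $ 2 = y"
  "(vector [x, y, z, w] :: 'a^4) $ 3 = z"
  "(vector [x, y, z, w] :: 'a^4) $ 4 = w"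
  unfolding vector_def by simp_all

lemma Amat_mult_nth:
  "(Amat a u *v v) $ 1 = of_real a * v $ 1 + v $ 2"
  "(Amat a u *v v) $ 2 = of_real a * v $ 2 + of_real u * v $ 3"
  "(Amat a u *v v) $ 3 = - of_real a * v $ 3 + v $ 4"
  "(Amat a u *v v) $ 4 = of_real u * v $ 1 - of_real a * v $ 4"
  by (simp_all add: Amat_def matrix_vector_mult_def sum_4)

lemma eigenvector_combination_first_coeff:
  fixes A :: "'a::field^'n^'n"
  assumes eig: "A *v v1 = \<mu>1 *s v1" "A *v v2 = \<mu>2 *s v2" "A *v v3 = \<mu>3 *s v3"
    and "v1 \<noteq> 0" "\<mu>1 \<noteq> \<mu>2" "\<mu>1 \<noteq> \<mu>3"
    and comb: "c1 *s v1 + c2 *s v2 + c3 *s v3 = 0"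
  shows "c1 = 0"
proof -
  \<comment> \<open>\<open>f = (A - \<mu>3)(A - \<mu>2)\<close> kills \<open>v2\<close> and \<open>v3\<close> and scales \<open>v1\<close> by \<open>(\<mu>1 - \<mu>2)(\<mu>1 - \<mu>3)\<close>.\<close>
  define f where "f w = A *v (A *v w - \<mu>2 *s w) - \<mu>3 *s (A *v w - \<mu>2 *s w)" for w
  have f_add: "f (w + w') = f w + f w'" for w w'
    by (simp add: f_def algebra_simps vector_scalar_commute)
  have f_eigen: "f (c *s w) = ((\<mu> - \<mu>2) * (\<mu> - \<mu>3) * c) *s w" if "A *v w = \<mu> *s w" for c \<mu> w
    using that by (simp add: f_def algebra_simps vector_scalar_commute)
  have "((\<mu>1 - \<mu>2) * (\<mu>1 - \<mu>3) * c1) *s v1 = f (c1 *s v1 + c2 *s v2 + c3 *s v3)"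
    by (simp add: f_add f_eigen[OF eig(1)] f_eigen[OF eig(2)] f_eigen[OF eig(3)])
  also have "\<dots> = 0"
    by (simp add: comb f_def)
  finally show ?thesis
    using assms(4-6) by simp
qed

lemma eigenvectors3_independent:
  fixes A :: "'a::field^'n^'n"
  assumes eig: "A *v v1 = \<mu>1 *s v1" "A *v v2 = \<mu>2 *s v2" "A *v v3 = \<mu>3 *s v3"
    and nz: "v1 \<noteq> 0" "v2 \<noteq> 0" "v3 \<noteq> 0"
    and dist: "\<mu>1 \<noteq> \<mu>2" "\<mu>1 \<noteq> \<mu>3" "\<mu>2 \<noteq> \<mu>3"
    and comb: "c1 *s v1 + c2 *s v2 + c3 *s v3 = 0"
  shows "c1 = 0" "c2 = 0" "c3 = 0"
proof -
  show c1: "c1 = 0"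
    using eigenvector_combination_first_coeff[OF eig nz(1) dist(1,2) comb] .
  have "c2 *s v2 + c1 *s v1 + c3 *s v3 = 0"
    using comb by (simp add: add_ac)
  then show c2: "c2 = 0"
    by (rule eigenvector_combination_first_coeff[OF eig(2,1,3) nz(2) dist(1)[symmetric] dist(3)])
  show "c3 = 0"
    using comb c1 c2 nz(3) by simp
qed

definition symp_form :: "complex^4 \<Rightarrow> complex^4 \<Rightarrow> complex" where
  "symp_form u w = u$1 * w$4 - u$4 * w$1 - u$2 * w$3 + u$3 * w$2"

lemma symp_form_Amat_skew: "symp_form (Amat a u *v v) w + symp_form v (Amat a u *v w) = 0"
  unfolding symp_form_def Amat_mult_nth by (simp add: algebra_simps)

lemma symp_form_eigenvectors:
  assumes "Amat a u *v v = \<mu> *s v" "Amat a u *v w = \<nu> *s w" "\<mu> + \<nu> \<noteq> 0"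
  shows "symp_form v w = 0"
proof -
  have "(\<mu> + \<nu>) * symp_form v w = symp_form (Amat a u *v v) w + symp_form v (Amat a u *v w)"
    using assms(1,2) by (simp add: symp_form_def algebra_simps)
  then show ?thesis
    using assms(3) symp_form_Amat_skew by simp
qed

lemma symp_form_smult: "symp_form (c *s v) (d *s w) = c * d * symp_form v w"
  by (simp add: symp_form_def algebra_simps)

lemma symp_form_combination:
  assumes "symp_form v1 v3 = 0" "symp_form v2 v3 = 0"
  shows "symp_form (c1 *s v1 + c2 *s v2 + c3 *s v3) (d1 *s v1 + d2 *s v2 + d3 *s v3)
           = (c1 * d2 - c2 * d1) * symp_form v1 v2"
proof -
  have "symp_form (c1 *s v1 + c2 *s v2 + c3 *s v3) (d1 *s v1 + d2 *s v2 + d3 *s v3)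
      = (c1 * d2 - c2 * d1) * symp_form v1 v2 + (c1 * d3 - c3 * d1) * symp_form v1 v3
        + (c2 * d3 - c3 * d2) * symp_form v2 v3"
    by (simp add: symp_form_def algebra_simps)
  with assms show ?thesis
    by simp
qed

lemma has_vector_derivative_symp_form:
  assumes "(P has_vector_derivative P') (at x)" "(Q has_vector_derivative Q') (at x)"
  shows "((\<lambda>x. symp_form (P x) (Q x)) has_vector_derivative symp_form P' (Q x) + symp_form (P x) Q') (at x)"
proof -
  have nth: "((\<lambda>x. F x $ i) has_vector_derivative F' $ i) (at x)"
    if "(F has_vector_derivative F') (at x)" for F :: "real \<Rightarrow> complex^4" and F' i
    using bounded_linear.has_vector_derivative[OF bounded_linear_vec_nth that] by simp
  show ?thesis
    unfolding symp_form_def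
    by (rule derivative_eq_intros nth[OF assms(1)] nth[OF assms(2)] | simp)+
qed

lemma symp_form_solutions_constant:
  assumes "is_solution a Ut P" "is_solution a Ut Q"
  shows "symp_form (P x) (Q x) = symp_form (P y) (Q y)"
proof -
  obtain DP where "finite DP" and contP: "continuous_on UNIV P"
    and P': "\<And>x. x \<notin> DP \<Longrightarrow> (P has_vector_derivative Amat a (Ut x) *v P x) (at x)"
    using assms(1) unfolding is_solution_def by blast
  obtain DQ where "finite DQ" and contQ: "continuous_on UNIV Q"
    and Q': "\<And>x. x \<notin> DQ \<Longrightarrow> (Q has_vector_derivative Amat a (Ut x) *v Q x) (at x)"
    using assms(2) unfolding is_solution_def by blast
  have "continuous_on UNIV (\<lambda>x. symp_form (P x) (Q x))"
    unfolding symp_form_def using contP contQ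
    by (intro continuous_intros;
        auto intro: continuous_on_compose2[OF bounded_linear.continuous_on[OF bounded_linear_vec_nth]])
  moreover have "((\<lambda>x. symp_form (P x) (Q x)) has_derivative (\<lambda>h. 0)) (at z within UNIV)"
    if "z \<notin> DP \<union> DQ" for z
    using has_vector_derivative_symp_form[OF P' Q', of z] symp_form_Amat_skew[of a "Ut z" "P z" "Q z"] that
    by (simp add: has_vector_derivative_def)
  ultimately have "(\<lambda>x. symp_form (P x) (Q x)) constant_on UNIV"
    using \<open>finite DP\<close> \<open>finite DQ\<close>
    by (intro has_derivative_zero_connected_constant_on[where K = "DP \<union> DQ"]) auto
  then show ?thesis
    by (auto simp: constant_on_def)
qed

locale eigenmodes =
  fixes X :: "real set" and a u :: real and \<mu>1 \<mu>2 \<mu>3 :: complex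
    and \<psi>1 \<psi>2 \<psi>3 :: "real \<Rightarrow> complex^4"
  assumes X_nonempty: "X \<noteq> {}"
    and eigen: "\<And>x. x \<in> X \<Longrightarrow> Amat a u *v \<psi>1 x = \<mu>1 *s \<psi>1 x"
               "\<And>x. x \<in> X \<Longrightarrow> Amat a u *v \<psi>2 x = \<mu>2 *s \<psi>2 x"
               "\<And>x. x \<in> X \<Longrightarrow> Amat a u *v \<psi>3 x = \<mu>3 *s \<psi>3 x"
    and nonzero: "\<And>x. x \<in> X \<Longrightarrow> \<psi>1 x \<noteq> 0" "\<And>x. x \<in> X \<Longrightarrow> \<psi>2 x \<noteq> 0"
                 "\<And>x. x \<in> X \<Longrightarrow> \<psi>3 x \<noteq> 0"
    and distinct: "\<mu>1 \<noteq> \<mu>2" "\<mu>1 \<noteq> \<mu>3" "\<mu>2 \<noteq> \<mu>3"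
    and not_opposite: "\<mu>1 + \<mu>3 \<noteq> 0" "\<mu>2 + \<mu>3 \<noteq> 0"
begin

definition expansion :: "(real \<Rightarrow> complex^4) \<Rightarrow> complex \<Rightarrow> complex \<Rightarrow> complex \<Rightarrow> bool" where
  "expansion \<Psi> c1 c2 c3 \<longleftrightarrow> (\<forall>x\<in>X. \<Psi> x = c1 *s \<psi>1 x + c2 *s \<psi>2 x + c3 *s \<psi>3 x)"

definition coeffs :: "(real \<Rightarrow> complex^4) \<Rightarrow> complex^2" where
  "coeffs \<Psi> = (THE c. \<exists>c3. expansion \<Psi> (c$1) (c$2) c3)"

lemma expansion_unique:
  assumes "expansion \<Psi> c1 c2 c3" "expansion \<Psi> d1 d2 d3"
  shows "c1 = d1 \<and> c2 = d2 \<and> c3 = d3"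
proof -
  obtain x where x: "x \<in> X"
    using X_nonempty by blast
  have "(c1 - d1) *s \<psi>1 x + (c2 - d2) *s \<psi>2 x + (c3 - d3) *s \<psi>3 x = 0"
    using assms x unfolding expansion_def by (simp add: algebra_simps)
  from eigenvectors3_independent[OF eigen[OF x] nonzero[OF x] distinct this] show ?thesis
    by simp
qed

lemma coeffs_eq:
  assumes "expansion \<Psi> c1 c2 c3"
  shows "coeffs \<Psi> = vector [c1, c2]"
  unfolding coeffs_def
proof (rule the_equality)
  show "\<exists>c3'. expansion \<Psi> ((vector [c1, c2] :: complex^2) $ 1) ((vector [c1, c2] :: complex^2) $ 2) c3'"
    using assms by auto
next
  fix c :: "complex^2"
  assume "\<exists>c3'. expansion \<Psi> (c$1) (c$2) c3'"
  then show "c = vector [c1, c2]"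
    using expansion_unique[OF assms] by (auto simp: vec_eq_iff forall_2)
qed

lemma symp_form_expansion:
  assumes "expansion \<Psi> c1 c2 c3" "expansion \<Phi> d1 d2 d3" "x \<in> X"
  shows "symp_form (\<Psi> x) (\<Phi> x) = (c1 * d2 - c2 * d1) * symp_form (\<psi>1 x) (\<psi>2 x)"
proof -
  have "symp_form (\<psi>1 x) (\<psi>3 x) = 0" "symp_form (\<psi>2 x) (\<psi>3 x) = 0"
    using symp_form_eigenvectors[OF eigen(1,3)] symp_form_eigenvectors[OF eigen(2,3)] not_opposite
      \<open>x \<in> X\<close> by auto
  with assms show ?thesis
    unfolding expansion_def by (simp add: symp_form_combination)
qed

end

locale connection =
  L: eigenmodes XL a uL \<mu>1 \<mu>2 \<mu>3 \<psi>1 \<psi>2 \<psi>3 + R: eigenmodes XR a uR \<nu>1 \<nu>2 \<nu>3 \<phi>1 \<phi>2 \<phi>3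
  for XL a uL \<mu>1 \<mu>2 \<mu>3 \<psi>1 \<psi>2 \<psi>3 XR uR \<nu>1 \<nu>2 \<nu>3 \<phi>1 \<phi>2 \<phi>3
begin

lemma det_connection_matrix:
  fixes M :: "complex^2^2"
  assumes sol: "\<And>\<Psi>. \<Psi> \<in> S \<Longrightarrow> is_solution a Ut \<Psi>"
    and left: "\<And>\<Psi>. \<Psi> \<in> S \<Longrightarrow> \<exists>c1 c2 c3. L.expansion \<Psi> c1 c2 c3"
    and right: "\<And>\<Psi>. \<Psi> \<in> S \<Longrightarrow> \<exists>c1 c2 c3. R.expansion \<Psi> c1 c2 c3"
    and surj: "R.coeffs ` S = UNIV"
    and M: "\<And>\<Psi>. \<Psi> \<in> S \<Longrightarrow> L.coeffs \<Psi> = M *v R.coeffs \<Psi>"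
    and "x \<in> XL" "y \<in> XR"
  shows "det M * symp_form (\<psi>1 x) (\<psi>2 x) = symp_form (\<phi>1 y) (\<phi>2 y)"
proof -
  obtain \<Psi> where \<Psi>: "\<Psi> \<in> S" "R.coeffs \<Psi> = vector [1, 0]"
    using surj by (metis UNIV_I imageE)
  obtain \<Phi> where \<Phi>: "\<Phi> \<in> S" "R.coeffs \<Phi> = vector [0, 1]"
    using surj by (metis UNIV_I imageE)
  obtain a1 a2 a3 b1 b2 b3 where La: "L.expansion \<Psi> a1 a2 a3" and Lb: "L.expansion \<Phi> b1 b2 b3"
    using left \<Psi>(1) \<Phi>(1) by blast
  obtain a4 a5 a6 b4 b5 b6 where Ra: "R.expansion \<Psi> a4 a5 a6" and Rb: "R.expansion \<Phi> b4 b5 b6"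
    using right \<Psi>(1) \<Phi>(1) by blast
  have "vector [a1, a2] = M *v vector [1, 0]" "vector [b1, b2] = M *v vector [0, 1]"
    using M \<Psi> \<Phi> L.coeffs_eq[OF La] L.coeffs_eq[OF Lb] by simp_all
  then have det: "det M = a1 * b2 - a2 * b1"
    by (simp add: det_2 vec_eq_iff forall_2 matrix_vector_mult_def sum_2)
  have "vector [a4, a5] = (vector [1, 0] :: complex^2)" "vector [b4, b5] = (vector [0, 1] :: complex^2)"
    using \<Psi>(2) \<Phi>(2) R.coeffs_eq[OF Ra] R.coeffs_eq[OF Rb] by simp_all
  then have right_wronskian: "a4 * b5 - a5 * b4 = 1"
    by (simp add: vec_eq_iff forall_2)
  have "det M * symp_form (\<psi>1 x) (\<psi>2 x) = symp_form (\<Psi> x) (\<Phi> x)"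
    using L.symp_form_expansion[OF La Lb \<open>x \<in> XL\<close>] det by simp
  also have "\<dots> = symp_form (\<Psi> y) (\<Phi> y)"
    using sol[OF \<Psi>(1)] sol[OF \<Phi>(1)] by (rule symp_form_solutions_constant)
  also have "\<dots> = symp_form (\<phi>1 y) (\<phi>2 y)"
    using R.symp_form_expansion[OF Ra Rb \<open>y \<in> XR\<close>] right_wronskian by simp
  finally show ?thesis .
qed

end

lemma eigenmodes_scaled:
  assumes "X \<noteq> {}"
    and "Amat a u *v v1 = \<mu>1 *s v1" "Amat a u *v v2 = \<mu>2 *s v2" "Amat a u *v v3 = \<mu>3 *s v3"
    and "v1 \<noteq> 0" "v2 \<noteq> 0" "v3 \<noteq> 0"
    and "\<mu>1 \<noteq> \<mu>2" "\<mu>1 \<noteq> \<mu>3" "\<mu>2 \<noteq> \<mu>3" "\<mu>1 + \<mu>3 \<noteq> 0" "\<mu>2 + \<mu>3 \<noteq> 0"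
    and "\<And>x. x \<in> X \<Longrightarrow> e1 x \<noteq> 0" "\<And>x. x \<in> X \<Longrightarrow> e2 x \<noteq> 0" "\<And>x. x \<in> X \<Longrightarrow> e3 x \<noteq> 0"
  shows "eigenmodes X a u \<mu>1 \<mu>2 \<mu>3 (\<lambda>x. e1 x *s v1) (\<lambda>x. e2 x *s v2) (\<lambda>x. e3 x *s v3)"
  using assms by unfold_locales (simp_all add: vector_scalar_commute vector_smult_assoc mult.commute)

lemma eigenmodes_left_plane_waves:
  fixes a k K lam :: real
  defines "v \<equiv> vector [Complex a k, - of_real K, - Complex a (- k), - of_real K] :: complex^4"
  assumes "X \<noteq> {}" "a^2 + k^2 = K" "k \<noteq> 0" "lam \<noteq> 0"
    and "Amat a (- K) *v w = of_real lam *s w" "w \<noteq> 0"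
  shows "eigenmodes X a (- K) (\<i> * of_real k) (- \<i> * of_real k) (of_real lam)
           (\<lambda>x. exp (\<i> * of_real (k * x)) *s v) (\<lambda>x. exp (- \<i> * of_real (k * x)) *s (\<chi> i. cnj (v $ i)))
           (\<lambda>x. of_real (exp (lam * x)) *s w)"
proof (rule eigenmodes_scaled)
  show "Amat a (- K) *v v = (\<i> * of_real k) *s v"
       "Amat a (- K) *v (\<chi> i. cnj (v $ i)) = (- \<i> * of_real k) *s (\<chi> i. cnj (v $ i))"
    using \<open>a^2 + k^2 = K\<close> unfolding v_def
    by (simp_all add: vec_eq_iff forall_4 Amat_mult_nth complex_eq_iff algebra_simps power2_eq_square)
  have "K \<noteq> 0"
    using \<open>a^2 + k^2 = K\<close> \<open>k \<noteq> 0\<close> sum_power2_gt_zero_iff[of a k] by auto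
  then show "v \<noteq> 0" "(\<chi> i. cnj (v $ i)) \<noteq> 0"
    unfolding v_def by (auto simp: vec_eq_iff forall_4)
qed (use assms in \<open>simp_all, auto simp: complex_eq_iff\<close>)

lemma eigenmodes_right_plane_waves:
  fixes a k K lam :: real
  defines "v \<equiv> vector [Complex a k, - of_real K, Complex a (- k), of_real K] :: complex^4"
  assumes "X \<noteq> {}" "a^2 + k^2 = K" "k \<noteq> 0" "lam \<noteq> 0"
    and "Amat a K *v w = of_real (- lam) *s w" "w \<noteq> 0"
  shows "eigenmodes X a K (\<i> * of_real k) (- \<i> * of_real k) (of_real (- lam))
           (\<lambda>x. exp (\<i> * of_real (k * x)) *s v) (\<lambda>x. exp (- \<i> * of_real (k * x)) *s (\<chi> i. cnj (v $ i)))
           (\<lambda>x. of_real (exp (- lam * x)) *s w)"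
proof (rule eigenmodes_scaled)
  show "Amat a K *v v = (\<i> * of_real k) *s v"
       "Amat a K *v (\<chi> i. cnj (v $ i)) = (- \<i> * of_real k) *s (\<chi> i. cnj (v $ i))"
    using \<open>a^2 + k^2 = K\<close> unfolding v_def
    by (simp_all add: vec_eq_iff forall_4 Amat_mult_nth complex_eq_iff algebra_simps power2_eq_square)
  have "K \<noteq> 0"
    using \<open>a^2 + k^2 = K\<close> \<open>k \<noteq> 0\<close> sum_power2_gt_zero_iff[of a k] by auto
  then show "v \<noteq> 0" "(\<chi> i. cnj (v $ i)) \<noteq> 0"
    unfolding v_def by (auto simp: vec_eq_iff forall_4)
qed (use assms in \<open>simp_all, auto simp: complex_eq_iff\<close>)

lemma symp_form_left_plane_waves:
  fixes a k K x :: real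
  defines "v \<equiv> vector [Complex a k, - of_real K, - Complex a (- k), - of_real K] :: complex^4"
  shows "symp_form (exp (\<i> * of_real (k * x)) *s v) (exp (- \<i> * of_real (k * x)) *s (\<chi> i. cnj (v $ i)))
           = \<i> * of_real (- 4 * k * K)"
proof -
  have "exp (\<i> * of_real (k * x)) * exp (- \<i> * of_real (k * x)) = 1"
    by (simp flip: exp_add)
  then show ?thesis
    by (simp only: symp_form_smult mult_1) (simp add: v_def symp_form_def complex_eq_iff)
qed

lemma symp_form_right_plane_waves:
  fixes a k K x :: real
  defines "v \<equiv> vector [Complex a k, - of_real K, Complex a (- k), of_real K] :: complex^4"
  shows "symp_form (exp (\<i> * of_real (k * x)) *s v) (exp (- \<i> * of_real (k * x)) *s (\<chi> i. cnj (v $ i)))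
           = \<i> * of_real (4 * k * K)"
proof -
  have "exp (\<i> * of_real (k * x)) * exp (- \<i> * of_real (k * x)) = 1"
    by (simp flip: exp_add)
  then show ?thesis
    by (simp only: symp_form_smult mult_1) (simp add: v_def symp_form_def complex_eq_iff)
qed

theorem mainTheorem6:
  fixes m hbar E U0 l \<theta> :: real
    and U :: "real \<Rightarrow> real"
    and wp wm :: "complex^4"
    and M :: "complex^2^2"
  assumes m_pos: "m > 0" and hbar_pos: "hbar > 0"
    and E_pos: "0 < E" and E_lt: "E < U0" and l_pos: "l > 0"
    and U_pc: "piecewise_continuous U"
    and U_left: "\<forall>x<0. U x = 0" and U_right: "\<forall>x>l. U x = U0"
    and theta: "- (pi/2) < \<theta>" "\<theta> < pi/2"
  defines "\<kappa> \<equiv> sqrt (2 * m * E) / hbar"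
  defines "a \<equiv> \<kappa> * sin \<theta>"
  defines "k \<equiv> \<kappa> * cos \<theta>"
  defines "lam \<equiv> sqrt (a^2 + \<kappa>^2)"
  defines "KU2 \<equiv> 2 * m / hbar^2 * (U0 - E)"
  assumes KU2_gt: "KU2 > a^2"
  defines "kU \<equiv> sqrt (KU2 - a^2)"
  defines "lamU \<equiv> sqrt (a^2 + KU2)"
  defines "Ut \<equiv> (\<lambda>x. 2 * m / hbar^2 * (U x - E))"
  defines "vR \<equiv> vector [Complex a k, - complex_of_real (\<kappa>^2), - Complex a (- k),
                          - complex_of_real (\<kappa>^2)] :: complex^4"
  defines "vL \<equiv> (\<chi> i. cnj (vR $ i)) :: complex^4"
  defines "vR' \<equiv> vector [Complex a kU, - complex_of_real KU2, Complex a (- kU),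
                          complex_of_real KU2] :: complex^4"
  defines "vL' \<equiv> (\<chi> i. cnj (vR' $ i)) :: complex^4"
  assumes wp_nz: "wp \<noteq> 0"
    and wp_eig: "Amat a (- (\<kappa>^2)) *v wp = complex_of_real lam *s wp"
    and wm_nz: "wm \<noteq> 0"
    and wm_eig: "Amat a KU2 *v wm = complex_of_real (- lamU) *s wm"
  defines "\<psi>R \<equiv> (\<lambda>x. exp (\<i> * complex_of_real (k * x)) *s vR)"
  defines "\<psi>L \<equiv> (\<lambda>x. exp (- \<i> * complex_of_real (k * x)) *s vL)"
  defines "\<psi>p \<equiv> (\<lambda>x. complex_of_real (exp (lam * x)) *s wp)"
  defines "\<phi>R \<equiv> (\<lambda>x. exp (\<i> * complex_of_real (kU * x)) *s vR')"
  defines "\<phi>L \<equiv> (\<lambda>x. exp (- \<i> * complex_of_real (kU * x)) *s vL')"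
  defines "\<phi>m \<equiv> (\<lambda>x. complex_of_real (exp (- lamU * x)) *s wm)"
  defines "S \<equiv> {\<Psi>. is_solution a Ut \<Psi> \<and>
                 (\<exists>a1 a2 a3. \<forall>x<0. \<Psi> x = a1 *s \<psi>R x + a2 *s \<psi>L x + a3 *s \<psi>p x) \<and>
                 (\<exists>a4 a5 a6. \<forall>x>l. \<Psi> x = a4 *s \<phi>R x + a5 *s \<phi>L x + a6 *s \<phi>m x)}"
  defines "leftc \<equiv> (\<lambda>\<Psi>. THE c :: complex^2. \<exists>a3. \<forall>x<0.
                 \<Psi> x = (c $ 1) *s \<psi>R x + (c $ 2) *s \<psi>L x + a3 *s \<psi>p x)"
  defines "rightc \<equiv> (\<lambda>\<Psi>. THE c :: complex^2. \<exists>a6. \<forall>x>l.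
                 \<Psi> x = (c $ 1) *s \<phi>R x + (c $ 2) *s \<phi>L x + a6 *s \<phi>m x)"
  assumes left_lin: "\<forall>\<Psi>\<in>S. \<forall>\<Phi>\<in>S. \<forall>c::complex.
                 leftc (\<lambda>x. \<Psi> x + c *s \<Phi> x) = leftc \<Psi> + c *s leftc \<Phi>"
    and right_lin: "\<forall>\<Psi>\<in>S. \<forall>\<Phi>\<in>S. \<forall>c::complex.
                 rightc (\<lambda>x. \<Psi> x + c *s \<Phi> x) = rightc \<Psi> + c *s rightc \<Phi>"
    and left_bij: "bij_betw leftc S UNIV"
    and right_bij: "bij_betw rightc S UNIV"
    and M_def: "\<forall>\<Psi>\<in>S. leftc \<Psi> = M *v rightc \<Psi>"
  shows "det M = complex_of_real (kU * (E - U0) / (k * E))"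
proof -
  \<comment> \<open>The asymptotic form of the elements of \<open>S\<close> is built into \<open>S\<close>, so the hypotheses on \<open>U\<close>,
    the linearity of the coefficient maps and the injectivity of \<open>rightc\<close> and of \<open>leftc\<close> are not
    needed; only the surjectivity of \<open>rightc\<close> is.\<close>
  have "\<kappa> > 0" "cos \<theta> > 0"
    using m_pos E_pos hbar_pos theta by (auto simp: \<kappa>_def intro: cos_gt_zero_pi)
  then have "k > 0" "a^2 + k^2 = \<kappa>^2"
    unfolding a_def k_def by (simp_all add: power_mult_distrib flip: distrib_left)
  have "KU2 > 0"
    using KU2_gt zero_le_power2[of a] by linarith
  have "kU > 0" "a^2 + kU^2 = KU2" "lam > 0" "lamU > 0"
    using KU2_gt \<open>KU2 > 0\<close> \<open>\<kappa> > 0\<close> by (auto simp: kU_def lam_def lamU_def intro: add_nonneg_pos)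
  have L: "eigenmodes {x. x < 0} a (- (\<kappa>^2)) (\<i> * of_real k) (- \<i> * of_real k) (of_real lam) \<psi>R \<psi>L \<psi>p"
    unfolding \<psi>R_def \<psi>L_def \<psi>p_def vL_def vR_def
    using \<open>a^2 + k^2 = \<kappa>^2\<close> \<open>k > 0\<close> \<open>lam > 0\<close> wp_eig wp_nz
    by (intro eigenmodes_left_plane_waves) (auto intro: lt_ex)
  have R: "eigenmodes {x. l < x} a KU2 (\<i> * of_real kU) (- \<i> * of_real kU) (of_real (- lamU)) \<phi>R \<phi>L \<phi>m"
    unfolding \<phi>R_def \<phi>L_def \<phi>m_def vL'_def vR'_def
    using \<open>a^2 + kU^2 = KU2\<close> \<open>kU > 0\<close> \<open>lamU > 0\<close> wm_eig wm_nz
    by (intro eigenmodes_right_plane_waves) (auto intro: gt_ex)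
  interpret connection "{x. x < 0}" a "- (\<kappa>^2)" "\<i> * of_real k" "- \<i> * of_real k" "of_real lam"
      \<psi>R \<psi>L \<psi>p "{x. l < x}" KU2 "\<i> * of_real kU" "- \<i> * of_real kU" "of_real (- lamU)" \<phi>R \<phi>L \<phi>m
    using L R by (rule connection.intro)
  have "leftc = L.coeffs" "rightc = R.coeffs"
    unfolding leftc_def rightc_def L.coeffs_def R.coeffs_def L.expansion_def R.expansion_def
    by simp_all
  then have "det M * symp_form (\<psi>R (-1)) (\<psi>L (-1)) = symp_form (\<phi>R (l + 1)) (\<phi>L (l + 1))"
    using M_def bij_betw_imp_surj_on[OF right_bij] l_pos
    by (intro det_connection_matrix[where S = S and Ut = Ut])
       (auto simp: S_def L.expansion_def R.expansion_def)
  then have wronskians: "det M * (\<i> * of_real (- 4 * k * \<kappa>^2)) = \<i> * of_real (4 * kU * KU2)"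
    unfolding \<psi>R_def \<psi>L_def \<phi>R_def \<phi>L_def vL_def vR_def vL'_def vR'_def
    by (simp only: symp_form_left_plane_waves symp_form_right_plane_waves)
  have solve: "x = of_real (z / y)" if "x * (\<i> * of_real y) = \<i> * of_real z" "y \<noteq> 0"
    for x :: complex and y z :: real
    using that by (simp add: field_simps)
  have "det M = of_real (4 * kU * KU2 / (- 4 * k * \<kappa>^2))"
    by (rule solve[OF wronskians]) (use \<open>k > 0\<close> \<open>\<kappa> > 0\<close> in simp)
  also have "4 * kU * KU2 / (- 4 * k * \<kappa>^2) = kU * (E - U0) / (k * E)"
    unfolding KU2_def \<kappa>_def using m_pos hbar_pos E_pos \<open>k > 0\<close>
    by (simp add: power_divide field_simps)
  finally show ?thesis .
qed

end
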